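(* Let $\Omega_m$ be a finite set with $m\in\mathbb N$ elements and $v_0:2^{\Omega_m}\to[0,\infty)$ non-decreasing with $v_0(\emptyset)=0$, and suppose there is $g:\{1,\dots,m\}\to[0,\infty)$ with $v_0(A)=g(|A|)$ for all nonempty $A\subset\Omega_m$. Define $v_{n+1}(A)=\sup_{\mathcal I\in\Sigma}\mu_{v_n,\mathcal I}(A)$, $A\subset\Omega_m$, $n\ge0$. Then $v_2=v_1$, and $v_1$ is submodular.
   Context: $\Sigma$ denotes the set of all chains $\mathcal I\subset2^{\Omega_m}$ (totally ordered by inclusion) containing $\emptyset$ and $\Omega_m$ and generating $2^{\Omega_m}$ as a $\sigma$-algebra (equivalently, maximal chains of subsets). For non-decreasing $v$ and $\mathcal I\in\Sigma$, $\mu_{v,\mathcal I}$ is the unique measure on $2^{\Omega_m}$ with $\mu_{v,\mathcal I}(I)=v(I)$ for $I\in\mathcal I$. Non-decreasing means $v(A)\le v(B)$ for $A\subset B$; submodular means $v(A)+v(B)\ge v(A\cup B)+v(A\cap B)$. *)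

theory Defs
  imports "HOL-Analysis.Analysis"
begin

definition chains_Sigma :: "'a set \<Rightarrow> 'a set set set" where
  "chains_Sigma \<Omega> = {\<I>. \<I> \<subseteq> Pow \<Omega> \<and> (\<forall>I\<in>\<I>. \<forall>J\<in>\<I>. I \<subseteq> J \<or> J \<subseteq> I)
      \<and> {} \<in> \<I> \<and> \<Omega> \<in> \<I> \<and> sigma_sets \<Omega> \<I> = Pow \<Omega>}"

definition chain_measure :: "'a set \<Rightarrow> ('a set \<Rightarrow> real) \<Rightarrow> 'a set set \<Rightarrow> 'a measure" where
  "chain_measure \<Omega> v \<I> = (THE M. space M = \<Omega> \<and> sets M = Pow \<Omega> \<and> finite_measure M
      \<and> (\<forall>I\<in>\<I>. measure M I = v I))"

definition v_next :: "'a set \<Rightarrow> ('a set \<Rightarrow> real) \<Rightarrow> 'a set \<Rightarrow> real" where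
  "v_next \<Omega> v A = (SUP \<I>\<in>chains_Sigma \<Omega>. measure (chain_measure \<Omega> v \<I>) A)"

definition submodular_on :: "'a set \<Rightarrow> ('a set \<Rightarrow> real) \<Rightarrow> bool" where
  "submodular_on \<Omega> v \<longleftrightarrow> (\<forall>A B. A \<subseteq> \<Omega> \<longrightarrow> B \<subseteq> \<Omega> \<longrightarrow> v A + v B \<ge> v (A \<union> B) + v (A \<inter> B))"

end

theory Submission
  imports Defs
begin

(* A chain in Sigma on a finite set is the chain of lower sets {pi <= k} of a ranking
   pi : Omega -> {1..m}, and mu_{v,I} puts the mass v {pi <= pi x} - v {pi <= pi x - 1} on x.
   When v A = h |A|, these masses are the increments h k - h (k - 1) permuted by pi, so
   v_1 A = F |A| where F j is the sum of the j largest increments of h.  An exchange argument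
   shows that the increments of F decrease.  This gives the submodularity of v_1, and it means
   that the j largest increments of F are its first j ones, whose sum is F j; hence v_2 = v_1. *)

definition increment :: "(nat \<Rightarrow> real) \<Rightarrow> nat \<Rightarrow> real" where
  "increment h k = h k - h (k - 1)"

lemma sum_increment: "(\<Sum>k\<in>{1..n}. increment h k) = h n - h 0"
  using sum_telescope''[of 0 n h] by (simp add: increment_def)

definition lower_set :: "'a set \<Rightarrow> ('a \<Rightarrow> nat) \<Rightarrow> nat \<Rightarrow> 'a set" where
  "lower_set \<Omega> \<pi> k = {y\<in>\<Omega>. \<pi> y \<le> k}"

definition chain_of :: "'a set \<Rightarrow> ('a \<Rightarrow> nat) \<Rightarrow> 'a set set" where
  "chain_of \<Omega> \<pi> = lower_set \<Omega> \<pi> ` {0..card \<Omega>}"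

locale ranking =
  fixes \<Omega> :: "'a set" and \<pi> :: "'a \<Rightarrow> nat"
  assumes bij: "bij_betw \<pi> \<Omega> {1..card \<Omega>}"
begin

lemma finite: "finite \<Omega>"
  using bij bij_betw_finite by (metis card.infinite finite_atLeastAtMost)

lemma inj: "inj_on \<pi> \<Omega>"
  using bij by (simp add: bij_betw_def)

lemma rank_bounds: "x \<in> \<Omega> \<Longrightarrow> 1 \<le> \<pi> x \<and> \<pi> x \<le> card \<Omega>"
  using bij by (auto simp: bij_betw_def)

lemma lower_set_0: "lower_set \<Omega> \<pi> 0 = {}"
  using rank_bounds by (fastforce simp: lower_set_def)

lemma lower_set_card: "lower_set \<Omega> \<pi> (card \<Omega>) = \<Omega>"
  using rank_bounds by (auto simp: lower_set_def)

lemma bij_betw_lower_set: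
  assumes "k \<le> card \<Omega>"
  shows "bij_betw \<pi> (lower_set \<Omega> \<pi> k) {1..k}"
proof -
  have "\<pi> ` lower_set \<Omega> \<pi> k = {1..k}"
  proof (intro equalityI subsetI)
    fix j assume j: "j \<in> {1..k}"
    then obtain y where "y \<in> \<Omega>" "j = \<pi> y"
      using bij assms by (force simp: bij_betw_def)
    then show "j \<in> \<pi> ` lower_set \<Omega> \<pi> k"
      using j by (auto simp: lower_set_def)
  qed (use rank_bounds in \<open>auto simp: lower_set_def\<close>)
  then show ?thesis
    using inj_on_subset[OF inj] by (auto simp: bij_betw_def lower_set_def)
qed

lemma card_lower_set: "k \<le> card \<Omega> \<Longrightarrow> card (lower_set \<Omega> \<pi> k) = k"
  using bij_betw_same_card[OF bij_betw_lower_set] by simp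

lemma lower_set_diff:
  assumes "x \<in> \<Omega>"
  shows "lower_set \<Omega> \<pi> (\<pi> x) - lower_set \<Omega> \<pi> (\<pi> x - 1) = {x}"
  using assms rank_bounds[OF assms] inj_onD[OF inj _ _ assms]
  by (fastforce simp: lower_set_def)

lemma chain_of_in_chains_Sigma: "chain_of \<Omega> \<pi> \<in> chains_Sigma \<Omega>"
proof -
  let ?C = "chain_of \<Omega> \<pi>"
  have C_Pow: "?C \<subseteq> Pow \<Omega>"
    by (auto simp: chain_of_def lower_set_def)
  interpret sigma_algebra \<Omega> "sigma_sets \<Omega> ?C"
    using sigma_algebra_sigma_sets[OF C_Pow] .
  have "lower_set \<Omega> \<pi> (\<pi> x) \<in> ?C" "lower_set \<Omega> \<pi> (\<pi> x - 1) \<in> ?C" if "x \<in> \<Omega>" for x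
    using rank_bounds[OF that] by (auto simp: chain_of_def)
  then have singleton: "{x} \<in> sigma_sets \<Omega> ?C" if "x \<in> \<Omega>" for x
    using lower_set_diff[OF that] that by (metis sigma_sets.Basic Diff)
  have "A \<in> sigma_sets \<Omega> ?C" if "A \<subseteq> \<Omega>" for A
  proof -
    have "A = (\<Union>x\<in>A. {x})" by blast
    then show ?thesis
      using finite_subset[OF that finite] singleton that by (metis finite_UN subsetD)
  qed
  then have "sigma_sets \<Omega> ?C = Pow \<Omega>"
    using sigma_sets_into_sp[OF C_Pow] by blast
  moreover have "I \<subseteq> J \<or> J \<subseteq> I" if "I \<in> ?C" "J \<in> ?C" for I J
    using that by (auto simp: chain_of_def lower_set_def)
  moreover have "{} \<in> ?C" "\<Omega> \<in> ?C"
    using lower_set_0 lower_set_card by (force simp: chain_of_def)+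
  ultimately show ?thesis
    using C_Pow by (simp add: chains_Sigma_def)
qed

lemma measure_singleton_eq_increment:
  assumes "sets M = Pow \<Omega>" and "finite_measure M"
    and agree: "\<forall>I\<in>chain_of \<Omega> \<pi>. measure M I = v I" and x: "x \<in> \<Omega>"
  shows "measure M {x} = increment (\<lambda>k. v (lower_set \<Omega> \<pi> k)) (\<pi> x)"
proof -
  interpret finite_measure M by fact
  have in_chain: "lower_set \<Omega> \<pi> (\<pi> x) \<in> chain_of \<Omega> \<pi>" "lower_set \<Omega> \<pi> (\<pi> x - 1) \<in> chain_of \<Omega> \<pi>"
    using rank_bounds[OF x] by (auto simp: chain_of_def)
  have "lower_set \<Omega> \<pi> (\<pi> x - 1) \<subseteq> lower_set \<Omega> \<pi> (\<pi> x)"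
    by (auto simp: lower_set_def)
  then have "measure M {x} = measure M (lower_set \<Omega> \<pi> (\<pi> x)) - measure M (lower_set \<Omega> \<pi> (\<pi> x - 1))"
    using finite_measure_Diff[of "lower_set \<Omega> \<pi> (\<pi> x)" "lower_set \<Omega> \<pi> (\<pi> x - 1)"] lower_set_diff[OF x] assms(1)
    by (auto simp: lower_set_def)
  then show ?thesis
    using agree in_chain by (simp add: increment_def)
qed

lemma chain_measure_eqI:
  assumes "space M = \<Omega>" "sets M = Pow \<Omega>" "finite_measure M"
    and "\<forall>I\<in>chain_of \<Omega> \<pi>. measure M I = v I"
  shows "chain_measure \<Omega> v (chain_of \<Omega> \<pi>) = M"
  unfolding chain_measure_def
proof (rule the_equality)
  fix M'
  assume M': "space M' = \<Omega> \<and> sets M' = Pow \<Omega> \<and> finite_measure M' \<and> (\<forall>I\<in>chain_of \<Omega> \<pi>. measure M' I = v I)"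
  show "M' = M"
  proof (rule measure_eqI_finite[OF _ assms(2) finite])
    fix x assume "x \<in> \<Omega>"
    then have "measure M' {x} = measure M {x}"
      using measure_singleton_eq_increment M' assms by metis
    then show "emeasure M' {x} = emeasure M {x}"
      using M' assms(3) by (simp add: finite_measure.emeasure_eq_measure)
  qed (use M' in blast)
qed (use assms in blast)

lemma measure_chain_measure_chain_of:
  assumes "v {} = 0" and mono: "mono_on (Pow \<Omega>) v" and A: "A \<subseteq> \<Omega>"
  shows "measure (chain_measure \<Omega> v (chain_of \<Omega> \<pi>)) A
           = (\<Sum>x\<in>A. increment (\<lambda>k. v (lower_set \<Omega> \<pi> k)) (\<pi> x))"
proof -
  define w where "w x = increment (\<lambda>k. v (lower_set \<Omega> \<pi> k)) (\<pi> x)" for x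
  define M where "M = point_measure \<Omega> (\<lambda>x. ennreal (w x))"
  have "w x \<ge> 0" for x
  proof -
    have "v (lower_set \<Omega> \<pi> (\<pi> x - 1)) \<le> v (lower_set \<Omega> \<pi> (\<pi> x))"
      by (rule mono_onD[OF mono]) (auto simp: lower_set_def)
    then show ?thesis by (simp add: w_def increment_def)
  qed
  then have measure_M: "measure M B = (\<Sum>x\<in>B. w x)" if "B \<subseteq> \<Omega>" for B
    using measure_point_measure_finite_if[OF finite, of w] that by (simp add: M_def)
  have "finite_measure M"
    unfolding M_def using finite \<open>\<And>x. w x \<ge> 0\<close>
    by (intro finite_measureI) (simp add: space_point_measure emeasure_point_measure_finite)
  moreover have "measure M I = v I" if I: "I \<in> chain_of \<Omega> \<pi>" for I
  proof -
    obtain k where k: "k \<le> card \<Omega>" "I = lower_set \<Omega> \<pi> k"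
      using I by (auto simp: chain_of_def)
    have "measure M I = (\<Sum>j\<in>{1..k}. increment (\<lambda>k. v (lower_set \<Omega> \<pi> k)) j)"
      using measure_M sum.reindex_bij_betw[OF bij_betw_lower_set[OF k(1)]] k
      by (simp add: w_def lower_set_def)
    also have "\<dots> = v I"
      using sum_increment lower_set_0 assms(1) k(2) by simp
    finally show ?thesis .
  qed
  ultimately have "chain_measure \<Omega> v (chain_of \<Omega> \<pi>) = M"
    by (intro chain_measure_eqI) (auto simp: M_def space_point_measure sets_point_measure)
  then show ?thesis
    using measure_M[OF A] by (simp add: w_def)
qed

lemma sum_increment_lower_set_card_function:
  assumes v_h: "\<forall>S\<subseteq>\<Omega>. v S = h (card S)" and A: "A \<subseteq> \<Omega>"
  shows "(\<Sum>x\<in>A. increment (\<lambda>k. v (lower_set \<Omega> \<pi> k)) (\<pi> x)) = (\<Sum>k\<in>\<pi> ` A. increment h k)"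
proof -
  have v_lower_set: "v (lower_set \<Omega> \<pi> k) = h k" if "k \<le> card \<Omega>" for k
    using v_h card_lower_set[OF that] by (simp add: lower_set_def)
  have "increment (\<lambda>k. v (lower_set \<Omega> \<pi> k)) (\<pi> x) = increment h (\<pi> x)" if "x \<in> A" for x
  proof -
    have "\<pi> x \<le> card \<Omega>"
      using rank_bounds that A by blast
    then show ?thesis
      using v_lower_set by (simp add: increment_def)
  qed
  then show ?thesis
    using sum.reindex[OF inj_on_subset[OF inj A], of "increment h"] by simp
qed

end

lemma sigma_sets_separates_points:
  assumes "sigma_sets \<Omega> C = Pow \<Omega>" and "x \<in> \<Omega>" "y \<in> \<Omega>" "x \<noteq> y"
  obtains J where "J \<in> C" "(x \<in> J) \<noteq> (y \<in> J)"
proof (rule ccontr)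
  assume "\<not> thesis"
  then have no_sep: "\<forall>J\<in>C. x \<in> J \<longleftrightarrow> y \<in> J"
    using that by blast
  have "x \<in> T \<longleftrightarrow> y \<in> T" if "T \<in> sigma_sets \<Omega> C" for T
    using that by induction (use no_sep assms(2,3) in auto)
  moreover have "{x} \<in> sigma_sets \<Omega> C"
    using assms by simp
  ultimately show False
    using assms(4) by blast
qed

locale Sigma_chain =
  fixes \<Omega> :: "'a set" and C :: "'a set set"
  assumes finite: "finite \<Omega>" and in_chains_Sigma: "C \<in> chains_Sigma \<Omega>"
begin

lemma Pow: "C \<subseteq> Pow \<Omega>" and chain: "subset.chain C C" and empty_in: "{} \<in> C"
  and space_in: "\<Omega> \<in> C" and generates: "sigma_sets \<Omega> C = Pow \<Omega>"
  using in_chains_Sigma by (auto simp: chains_Sigma_def subset_chain_def)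

(* The cardinality of the least member containing x is the step at which x enters the chain. *)
definition least_member :: "'a \<Rightarrow> 'a set" where
  "least_member x = \<Inter>{J\<in>C. x \<in> J}"

definition rank :: "'a \<Rightarrow> nat" where
  "rank x = card (least_member x)"

lemma least_member_in: "x \<in> \<Omega> \<Longrightarrow> least_member x \<in> C \<and> x \<in> least_member x"
proof -
  assume "x \<in> \<Omega>"
  have "finite C"
    using Pow finite by (meson finite_Pow_iff finite_subset)
  have "\<Inter>{J\<in>C. x \<in> J} \<in> {J\<in>C. x \<in> J}"
    by (rule Inter_in_chain) (use \<open>finite C\<close> chain space_in \<open>x \<in> \<Omega>\<close> in \<open>auto simp: subset_chain_def\<close>)
  then show ?thesis
    by (simp add: least_member_def)
qed

lemma least_member_subset: "x \<in> \<Omega> \<Longrightarrow> least_member x \<subseteq> \<Omega>"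
  using Pow least_member_in by blast

lemma finite_least_member: "x \<in> \<Omega> \<Longrightarrow> finite (least_member x)"
  using finite_subset[OF least_member_subset finite] .

lemma least_member_le: "J \<in> C \<Longrightarrow> x \<in> J \<Longrightarrow> least_member x \<subseteq> J"
  by (auto simp: least_member_def)

lemma least_member_mono: "y \<in> least_member x \<Longrightarrow> least_member y \<subseteq> least_member x"
  by (auto simp: least_member_def)

lemma rank_le_iff:
  assumes "x \<in> \<Omega>" "y \<in> \<Omega>"
  shows "rank y \<le> rank x \<longleftrightarrow> least_member y \<subseteq> least_member x"
proof
  assume "rank y \<le> rank x"
  show "least_member y \<subseteq> least_member x"
  proof (rule ccontr)
    assume "\<not> least_member y \<subseteq> least_member x"
    then have "least_member x \<subset> least_member y"
      using chain least_member_in assms by (auto simp: subset_chain_def)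
    then have "rank x < rank y"
      using psubset_card_mono[OF finite_least_member[OF assms(2)]] by (simp add: rank_def)
    then show False
      using \<open>rank y \<le> rank x\<close> by simp
  qed
qed (use card_mono[OF finite_least_member[OF assms(1)]] in \<open>simp add: rank_def\<close>)

lemma least_member_inj:
  assumes xy: "x \<in> \<Omega>" "y \<in> \<Omega>" and "least_member x = least_member y"
  shows "x = y"
proof (rule ccontr)
  assume "x \<noteq> y"
  then obtain J where "J \<in> C" "(x \<in> J) \<noteq> (y \<in> J)"
    using sigma_sets_separates_points[OF generates xy] by blast
  then show False
    using least_member_le least_member_in assms by blast
qed

lemma least_member_eq_lower_set:
  assumes "x \<in> \<Omega>"
  shows "least_member x = lower_set \<Omega> rank (rank x)"
proof (intro equalityI subsetI)
  fix y assume y: "y \<in> least_member x"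
  then have "y \<in> \<Omega>"
    using least_member_subset assms by blast
  then show "y \<in> lower_set \<Omega> rank (rank x)"
    using rank_le_iff[OF assms] least_member_mono[OF y] by (simp add: lower_set_def)
next
  fix y assume "y \<in> lower_set \<Omega> rank (rank x)"
  then have "y \<in> \<Omega>" "least_member y \<subseteq> least_member x"
    using rank_le_iff[OF assms] by (auto simp: lower_set_def)
  then show "y \<in> least_member x"
    using least_member_in by blast
qed

lemma ranking_rank: "ranking \<Omega> rank"
proof -
  have "inj_on rank \<Omega>"
    using rank_le_iff least_member_inj by (intro inj_onI) (metis order_refl subset_antisym)
  moreover have "rank ` \<Omega> \<subseteq> {1..card \<Omega>}"
  proof (rule image_subsetI)
    fix x assume "x \<in> \<Omega>"
    then have "x \<in> least_member x" "least_member x \<subseteq> \<Omega>" "finite (least_member x)"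
      using least_member_in least_member_subset finite_least_member by auto
    then show "rank x \<in> {1..card \<Omega>}"
      using card_mono[OF finite] by (auto simp: rank_def Suc_le_eq card_gt_0_iff)
  qed
  ultimately show ?thesis
    by unfold_locales (simp add: bij_betw_def card_image card_subset_eq)
qed

interpretation ranking \<Omega> rank
  by (rule ranking_rank)

lemma subset_chain_of_rank: "C \<subseteq> chain_of \<Omega> rank"
proof
  fix J assume J: "J \<in> C"
  show "J \<in> chain_of \<Omega> rank"
  proof (cases "J = {}")
    case True
    then show ?thesis
      using lower_set_0 by (force simp: chain_of_def)
  next
    case False
    have J_\<Omega>: "J \<subseteq> \<Omega>"
      using J Pow by blast
    have J_eq: "J = \<Union>(least_member ` J)"
      using least_member_in least_member_le[OF J] J_\<Omega> by blast
    have "\<Union>(least_member ` J) \<in> least_member ` J"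
    proof (rule Union_in_chain)
      show "finite (least_member ` J)"
        using finite_subset[OF J_\<Omega> finite] by simp
      have "least_member ` J \<subseteq> C"
        using least_member_in J_\<Omega> by blast
      then show "subset.chain C (least_member ` J)"
        using chain unfolding subset_chain_def by blast
    qed (use False in simp)
    then obtain x where "x \<in> J" "J = lower_set \<Omega> rank (rank x)"
      using J_eq least_member_eq_lower_set J_\<Omega> by (metis imageE subsetD)
    then show ?thesis
      using rank_bounds J_\<Omega> by (auto simp: chain_of_def)
  qed
qed

lemma chain_of_rank_subset: "chain_of \<Omega> rank \<subseteq> C"
proof
  fix J assume "J \<in> chain_of \<Omega> rank"
  then obtain k where k: "k \<le> card \<Omega>" "J = lower_set \<Omega> rank k"
    by (auto simp: chain_of_def)
  show "J \<in> C"
  proof (cases "k = 0")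
    case True
    then show ?thesis
      using k lower_set_0 empty_in by simp
  next
    case False
    then obtain x where "x \<in> \<Omega>" "k = rank x"
      using k bij by (force simp: bij_betw_def)
    then show ?thesis
      using k least_member_eq_lower_set least_member_in by metis
  qed
qed

lemma eq_chain_of_rank: "C = chain_of \<Omega> rank"
  using subset_chain_of_rank chain_of_rank_subset by blast

end

lemma chains_Sigma_eq_rankings:
  "finite \<Omega> \<Longrightarrow> chains_Sigma \<Omega> = chain_of \<Omega> ` Collect (ranking \<Omega>)"
proof
  assume "finite \<Omega>"
  show "chains_Sigma \<Omega> \<subseteq> chain_of \<Omega> ` Collect (ranking \<Omega>)"
  proof
    fix C assume "C \<in> chains_Sigma \<Omega>"
    then interpret Sigma_chain \<Omega> C
      using \<open>finite \<Omega>\<close> by unfold_locales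
    show "C \<in> chain_of \<Omega> ` Collect (ranking \<Omega>)"
      using eq_chain_of_rank ranking_rank by blast
  qed
qed (use ranking.chain_of_in_chains_Sigma in blast)

lemma v_next_eq_SUP_rankings:
  assumes "finite \<Omega>" "v {} = 0" "mono_on (Pow \<Omega>) v" "A \<subseteq> \<Omega>"
  shows "v_next \<Omega> v A
           = (SUP \<pi>\<in>Collect (ranking \<Omega>). \<Sum>x\<in>A. increment (\<lambda>k. v (lower_set \<Omega> \<pi> k)) (\<pi> x))"
  unfolding v_next_def chains_Sigma_eq_rankings[OF assms(1)] image_image
  using ranking.measure_chain_measure_chain_of[OF _ assms(2-4)] by (intro SUP_cong) auto

lemma ranking_images:
  assumes fin: "finite \<Omega>" and A: "A \<subseteq> \<Omega>"
  shows "(\<lambda>\<pi>. \<pi> ` A) ` Collect (ranking \<Omega>) = {S. S \<subseteq> {1..card \<Omega>} \<and> card S = card A}"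
proof (intro equalityI subsetI)
  fix S assume "S \<in> (\<lambda>\<pi>. \<pi> ` A) ` Collect (ranking \<Omega>)"
  then obtain \<pi> where "ranking \<Omega> \<pi>" and S: "S = \<pi> ` A"
    by blast
  then interpret ranking \<Omega> \<pi>
    by simp
  show "S \<in> {S. S \<subseteq> {1..card \<Omega>} \<and> card S = card A}"
    using S A rank_bounds card_image[OF inj_on_subset[OF inj A]] by auto
next
  fix S assume "S \<in> {S. S \<subseteq> {1..card \<Omega>} \<and> card S = card A}"
  then have S: "S \<subseteq> {1..card \<Omega>}" "card S = card A"
    by auto
  have fin_A: "finite A" and fin_S: "finite S"
    using finite_subset[OF A fin] finite_subset[OF S(1)] by auto
  obtain f where f: "bij_betw f A S"
    using finite_same_card_bij[OF fin_A fin_S] S(2) by auto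
  have "card (\<Omega> - A) = card ({1..card \<Omega>} - S)"
    using card_Diff_subset[OF fin_A A] card_Diff_subset[OF fin_S S(1)] S(2) by simp
  then obtain g where g: "bij_betw g (\<Omega> - A) ({1..card \<Omega>} - S)"
    using finite_same_card_bij[of "\<Omega> - A" "{1..card \<Omega>} - S"] fin by auto
  define \<pi> where "\<pi> x = (if x \<in> A then f x else g x)" for x
  have \<pi>_A: "bij_betw \<pi> A S"
    using f by (rule bij_betw_cong[THEN iffD1, rotated]) (simp add: \<pi>_def)
  have "bij_betw \<pi> (\<Omega> - A) ({1..card \<Omega>} - S)"
    using g by (rule bij_betw_cong[THEN iffD1, rotated]) (simp add: \<pi>_def)
  then have "bij_betw \<pi> (A \<union> (\<Omega> - A)) (S \<union> ({1..card \<Omega>} - S))"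
    by (rule bij_betw_combine[OF \<pi>_A]) blast
  moreover have "A \<union> (\<Omega> - A) = \<Omega>" "S \<union> ({1..card \<Omega>} - S) = {1..card \<Omega>}"
    using A S(1) by auto
  ultimately show "S \<in> (\<lambda>\<pi>. \<pi> ` A) ` Collect (ranking \<Omega>)"
    using bij_betw_imp_surj_on[OF \<pi>_A] by (auto simp: ranking_def)
qed

(* Only meaningful for j <= m: otherwise the maximum is taken over the empty set. *)
definition sum_largest_increments :: "(nat \<Rightarrow> real) \<Rightarrow> nat \<Rightarrow> nat \<Rightarrow> real" where
  "sum_largest_increments h m j
     = Max ((\<lambda>S. \<Sum>k\<in>S. increment h k) ` {S. S \<subseteq> {1..m} \<and> card S = j})"

lemma finite_card_subsets: "finite {S. S \<subseteq> {1..m::nat} \<and> card S = j}"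
  by (rule finite_subset[of _ "Pow {1..m}"]) auto

lemma sum_increment_le_sum_largest_increments:
  "S \<subseteq> {1..m} \<Longrightarrow> (\<Sum>k\<in>S. increment h k) \<le> sum_largest_increments h m (card S)"
  unfolding sum_largest_increments_def by (rule Max_ge) (use finite_card_subsets in auto)

lemma sum_largest_increments_attained:
  assumes "j \<le> m"
  obtains S where "S \<subseteq> {1..m}" "card S = j" "sum_largest_increments h m j = (\<Sum>k\<in>S. increment h k)"
proof -
  have "{1..j} \<in> {S. S \<subseteq> {1..m} \<and> card S = j}"
    using assms by simp
  then have "sum_largest_increments h m j \<in> (\<lambda>S. \<Sum>k\<in>S. increment h k) ` {S. S \<subseteq> {1..m} \<and> card S = j}"
    unfolding sum_largest_increments_def by (intro Max_in finite_imageI finite_card_subsets) blast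
  then show thesis
    using that by auto
qed

lemma sum_largest_increments_0: "sum_largest_increments h m 0 = 0"
proof -
  obtain S where "S \<subseteq> {1..m}" "card S = 0" "sum_largest_increments h m 0 = (\<Sum>k\<in>S. increment h k)"
    using sum_largest_increments_attained by blast
  moreover from this have "S = {}"
    using finite_subset by fastforce
  ultimately show ?thesis
    by simp
qed

lemma sum_largest_increments_exchange:
  assumes "q \<le> a" "a \<le> p" "p \<le> m" "a + b = p + q"
  shows "sum_largest_increments h m p + sum_largest_increments h m q
           \<le> sum_largest_increments h m a + sum_largest_increments h m b"
proof -
  obtain S where S: "S \<subseteq> {1..m}" "card S = p" "sum_largest_increments h m p = (\<Sum>k\<in>S. increment h k)"
    using sum_largest_increments_attained assms(3) by blast
  have "q \<le> m"
    using assms by linarith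
  then obtain T where T: "T \<subseteq> {1..m}" "card T = q" "sum_largest_increments h m q = (\<Sum>k\<in>T. increment h k)"
    using sum_largest_increments_attained by blast
  have fin_S: "finite S" and fin_T: "finite T"
    using S(1) T(1) finite_subset by blast+
  (* move p - a indices of S - T from the optimal p-set S to the optimal q-set T *)
  have "card S \<le> card ((S - T) \<union> T)"
    by (rule card_mono) (use fin_S fin_T in auto)
  also have "\<dots> \<le> card (S - T) + card T"
    by (rule card_Un_le)
  finally have "p - a \<le> card (S - T)"
    using S(2) T(2) assms by linarith
  then obtain D where D: "D \<subseteq> S - T" "card D = p - a" "finite D"
    by (rule obtain_subset_with_card_n)
  have D_S: "D \<subseteq> S" and D_T: "T \<inter> D = {}"
    using D(1) by blast+
  have "card (S - D) = a"
    using card_Diff_subset[OF D(3) D_S] D(2) S(2) assms(2) by simp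
  then have "(\<Sum>k\<in>S - D. increment h k) \<le> sum_largest_increments h m a"
    using sum_increment_le_sum_largest_increments[of "S - D" m h] S(1) by auto
  moreover have "card (T \<union> D) = b"
    using card_Un_disjoint[OF fin_T D(3) D_T] D(2) T(2) assms by simp
  then have "(\<Sum>k\<in>T \<union> D. increment h k) \<le> sum_largest_increments h m b"
    using sum_increment_le_sum_largest_increments[of "T \<union> D" m h] S(1) T(1) D_S by auto
  moreover have "(\<Sum>k\<in>S. increment h k) = (\<Sum>k\<in>S - D. increment h k) + (\<Sum>k\<in>D. increment h k)"
    by (rule sum.subset_diff[OF D_S fin_S])
  moreover have "(\<Sum>k\<in>T \<union> D. increment h k) = (\<Sum>k\<in>T. increment h k) + (\<Sum>k\<in>D. increment h k)"
    by (rule sum.union_disjoint[OF fin_T D(3) D_T])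
  ultimately show ?thesis
    using S(3) T(3) by linarith
qed

lemma sum_largest_increments_mono:
  assumes "\<forall>k\<in>{1..m}. increment h k \<ge> 0"
  shows "mono_on {..m} (sum_largest_increments h m)"
proof (rule mono_onI)
  fix i j assume "i \<in> {..m}" "j \<in> {..m}" "i \<le> j"
  then have ij: "i \<le> j" "j \<le> m" "i \<le> m"
    by auto
  obtain S where S: "S \<subseteq> {1..m}" "card S = i" "sum_largest_increments h m i = (\<Sum>k\<in>S. increment h k)"
    using sum_largest_increments_attained[OF ij(3)] by blast
  have fin_S: "finite S"
    using S(1) finite_subset by blast
  have "card ({1..m} - S) = m - i"
    using card_Diff_subset[OF fin_S S(1)] S(2) by simp
  then have "j - i \<le> card ({1..m} - S)"
    using ij by simp
  then obtain D where D: "D \<subseteq> {1..m} - S" "card D = j - i" "finite D"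
    by (rule obtain_subset_with_card_n)
  have S_D: "S \<inter> D = {}"
    using D(1) by blast
  have "card (S \<union> D) = j"
    using card_Un_disjoint[OF fin_S D(3) S_D] D(2) S(2) ij by simp
  then have "(\<Sum>k\<in>S \<union> D. increment h k) \<le> sum_largest_increments h m j"
    using sum_increment_le_sum_largest_increments[of "S \<union> D" m h] S(1) D(1) by auto
  moreover have "(\<Sum>k\<in>S \<union> D. increment h k) = (\<Sum>k\<in>S. increment h k) + (\<Sum>k\<in>D. increment h k)"
    by (rule sum.union_disjoint[OF fin_S D(3) S_D])
  moreover have "(\<Sum>k\<in>D. increment h k) \<ge> 0"
    using D(1) assms by (intro sum_nonneg) auto
  ultimately show "sum_largest_increments h m i \<le> sum_largest_increments h m j"
    using S(3) by linarith
qed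

lemma sum_le_sum_initial_segment_antimono:
  fixes e :: "nat \<Rightarrow> real"
  assumes "antimono_on {1..n} e" "K \<subseteq> {1..n}"
  shows "(\<Sum>k\<in>K. e k) \<le> (\<Sum>k\<in>{1..card K}. e k)"
  using assms
proof (induction n arbitrary: K)
  case (Suc n)
  have IH: "(\<Sum>k\<in>K'. e k) \<le> (\<Sum>k\<in>{1..card K'}. e k)" if "K' \<subseteq> {1..n}" for K'
    using Suc.IH[OF monotone_on_subset[OF Suc.prems(1)] that] by auto
  show ?case
  proof (cases "Suc n \<in> K")
    case False
    then show ?thesis
      using IH Suc.prems(2) by (auto simp: atLeastAtMostSuc_conv)
  next
    case True
    define K' where "K' = K - {Suc n}"
    have K': "K' \<subseteq> {1..n}" "finite K'" "K = insert (Suc n) K'" "Suc n \<notin> K'"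
      using Suc.prems(2) True finite_subset by (auto simp: K'_def atLeastAtMostSuc_conv)
    then have "card K' \<le> n"
      using card_mono[of "{1..n}" K'] by simp
    then have "e (Suc n) \<le> e (Suc (card K'))"
      using monotone_onD[OF Suc.prems(1)] by simp
    then have "(\<Sum>k\<in>K. e k) \<le> e (Suc (card K')) + (\<Sum>k\<in>{1..card K'}. e k)"
      using IH[OF K'(1)] K' by simp
    also have "\<dots> = (\<Sum>k\<in>{1..card K}. e k)"
      using K' by (simp add: atLeastAtMostSuc_conv)
    finally show ?thesis .
  qed
qed simp

lemma sum_largest_increments_antimono:
  assumes "antimono_on {1..m} (increment h)" "j \<le> m"
  shows "sum_largest_increments h m j = h j - h 0"
proof (rule antisym)
  obtain S where S: "S \<subseteq> {1..m}" "card S = j" "sum_largest_increments h m j = (\<Sum>k\<in>S. increment h k)"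
    using sum_largest_increments_attained assms(2) by blast
  then show "sum_largest_increments h m j \<le> h j - h 0"
    using sum_le_sum_initial_segment_antimono[OF assms(1) S(1)] sum_increment by simp
  show "h j - h 0 \<le> sum_largest_increments h m j"
    using sum_increment_le_sum_largest_increments[of "{1..j}" m h] sum_increment assms(2) by simp
qed

lemma antimono_increment_sum_largest_increments:
  "antimono_on {1..m} (increment (sum_largest_increments h m))"
proof (rule monotone_onI)
  fix i j assume "i \<in> {1..m}" "j \<in> {1..m}" "i \<le> j"
  then have "sum_largest_increments h m j + sum_largest_increments h m (i - 1)
               \<le> sum_largest_increments h m i + sum_largest_increments h m (j - 1)"
    by (intro sum_largest_increments_exchange) auto
  then show "increment (sum_largest_increments h m) j \<le> increment (sum_largest_increments h m) i"
    by (simp add: increment_def)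
qed

lemma sum_largest_increments_idem:
  "j \<le> m \<Longrightarrow> sum_largest_increments (sum_largest_increments h m) m j = sum_largest_increments h m j"
  using sum_largest_increments_antimono[OF antimono_increment_sum_largest_increments]
  by (simp add: sum_largest_increments_0)

lemma mono_on_card_function:
  assumes fin: "finite \<Omega>" and mono: "mono_on (Pow \<Omega>) v" and v_h: "\<forall>S\<subseteq>\<Omega>. v S = h (card S)"
  shows "mono_on {..card \<Omega>} h"
proof (rule mono_onI)
  fix i j assume "i \<in> {..card \<Omega>}" "j \<in> {..card \<Omega>}" "i \<le> j"
  then obtain T where T: "T \<subseteq> \<Omega>" "card T = j"
    using obtain_subset_with_card_n by (metis atMost_iff)
  moreover from T obtain S where S: "S \<subseteq> T" "card S = i"
    using obtain_subset_with_card_n \<open>i \<le> j\<close> by metis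
  ultimately show "h i \<le> h j"
    using mono_onD[OF mono, of S T] v_h by auto
qed

lemma v_next_card_function:
  assumes fin: "finite \<Omega>" and v_h: "\<forall>S\<subseteq>\<Omega>. v S = h (card S)"
    and "h 0 = 0" and mono: "mono_on {..card \<Omega>} h" and A: "A \<subseteq> \<Omega>"
  shows "v_next \<Omega> v A = sum_largest_increments h (card \<Omega>) (card A)"
proof -
  have "v {} = 0"
    using v_h \<open>h 0 = 0\<close> by simp
  have "mono_on (Pow \<Omega>) v"
  proof (rule mono_onI)
    fix S T assume "S \<in> Pow \<Omega>" "T \<in> Pow \<Omega>" "S \<subseteq> T"
    then have "card S \<le> card T" "card T \<le> card \<Omega>" "T \<subseteq> \<Omega>"
      using card_mono[OF finite_subset[OF _ fin]] card_mono[OF fin] by auto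
    then show "v S \<le> v T"
      using v_h mono_onD[OF mono, of "card S" "card T"] \<open>S \<subseteq> T\<close> by auto
  qed
  have "v_next \<Omega> v A = (SUP \<pi>\<in>Collect (ranking \<Omega>). \<Sum>k\<in>\<pi> ` A. increment h k)"
    using v_next_eq_SUP_rankings[OF fin \<open>v {} = 0\<close> \<open>mono_on (Pow \<Omega>) v\<close> A]
      ranking.sum_increment_lower_set_card_function[OF _ v_h A] by simp
  also have "\<dots> = Sup ((\<lambda>S. \<Sum>k\<in>S. increment h k) ` {S. S \<subseteq> {1..card \<Omega>} \<and> card S = card A})"
    by (simp only: ranking_images[OF fin A, symmetric] image_image)
  also have "\<dots> = sum_largest_increments h (card \<Omega>) (card A)"
    unfolding sum_largest_increments_def
  proof (rule cSup_eq_Max)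
    have "{1..card A} \<in> {S. S \<subseteq> {1..card \<Omega>} \<and> card S = card A}"
      using card_mono[OF fin A] by simp
    then show "(\<lambda>S. \<Sum>k\<in>S. increment h k) ` {S. S \<subseteq> {1..card \<Omega>} \<and> card S = card A} \<noteq> {}"
      by blast
  qed (simp add: finite_card_subsets)
  finally show ?thesis .
qed

lemma submodular_on_card_function:
  assumes fin: "finite \<Omega>" and v_F: "\<forall>S\<subseteq>\<Omega>. v S = F (card S)"
    and concave: "\<And>p q a b. q \<le> a \<Longrightarrow> a \<le> p \<Longrightarrow> p \<le> card \<Omega> \<Longrightarrow> a + b = p + q
                    \<Longrightarrow> F p + F q \<le> F a + F b"
  shows "submodular_on \<Omega> v"
  unfolding submodular_on_def
proof (intro allI impI)
  fix A B assume A: "A \<subseteq> \<Omega>" and B: "B \<subseteq> \<Omega>"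
  have fin_A: "finite A" and fin_B: "finite B"
    using A B fin finite_subset by auto
  have "F (card (A \<union> B)) + F (card (A \<inter> B)) \<le> F (card A) + F (card B)"
  proof (rule concave)
    show "card (A \<inter> B) \<le> card A" "card A \<le> card (A \<union> B)"
      using fin_A fin_B by (simp_all add: card_mono)
    show "card (A \<union> B) \<le> card \<Omega>"
      using A B by (simp add: card_mono[OF fin])
    show "card A + card B = card (A \<union> B) + card (A \<inter> B)"
      by (rule card_Un_Int[OF fin_A fin_B])
  qed
  moreover have "A \<union> B \<subseteq> \<Omega>" "A \<inter> B \<subseteq> \<Omega>"
    using A B by auto
  ultimately show "v (A \<union> B) + v (A \<inter> B) \<le> v A + v B"
    using v_F A B by simp
qed

theorem proposition23:
  fixes \<Omega> :: "'a set" and m :: nat and v0 :: "'a set \<Rightarrow> real" and g :: "nat \<Rightarrow> real"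
  assumes "finite \<Omega>" and "card \<Omega> = m"
    and "\<forall>A. A \<subseteq> \<Omega> \<longrightarrow> v0 A \<ge> 0"
    and "\<forall>A B. A \<subseteq> B \<longrightarrow> B \<subseteq> \<Omega> \<longrightarrow> v0 A \<le> v0 B"
    and "v0 {} = 0"
    and "\<forall>k\<in>{1..m}. g k \<ge> 0"
    and "\<forall>A. A \<subseteq> \<Omega> \<longrightarrow> A \<noteq> {} \<longrightarrow> v0 A = g (card A)"
  shows "(\<forall>A. A \<subseteq> \<Omega> \<longrightarrow> v_next \<Omega> (v_next \<Omega> v0) A = v_next \<Omega> v0 A)
         \<and> submodular_on \<Omega> (v_next \<Omega> v0)"
proof -
  note fin = assms(1)
  define h where "h k = (if k = 0 then 0 else g k)" for k
  have v0_h: "\<forall>S\<subseteq>\<Omega>. v0 S = h (card S)"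
    using assms(5,7) finite_subset[OF _ fin] by (simp add: h_def)
  have "mono_on (Pow \<Omega>) v0"
    using assms(4) by (auto intro: mono_onI)
  then have h_mono: "mono_on {..m} h"
    using mono_on_card_function[OF fin _ v0_h] assms(2) by simp
  define F where "F = sum_largest_increments h m"
  have "h 0 = 0"
    by (simp add: h_def)
  then have v1_F: "\<forall>A\<subseteq>\<Omega>. v_next \<Omega> v0 A = F (card A)"
    using v_next_card_function[OF fin v0_h] h_mono assms(2) by (simp add: F_def)
  have "\<forall>k\<in>{1..m}. increment h k \<ge> 0"
    using mono_onD[OF h_mono] by (simp add: increment_def)
  then have "mono_on {..m} F"
    unfolding F_def by (rule sum_largest_increments_mono)
  then have "\<forall>A\<subseteq>\<Omega>. v_next \<Omega> (v_next \<Omega> v0) A = F (card A)"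
    using v_next_card_function[OF fin v1_F] sum_largest_increments_idem card_mono[OF fin] assms(2)
    by (simp add: F_def sum_largest_increments_0)
  moreover have "submodular_on \<Omega> (v_next \<Omega> v0)"
    using submodular_on_card_function[OF fin v1_F] sum_largest_increments_exchange assms(2)
    by (simp add: F_def)
  ultimately show ?thesis
    using v1_F by simp
qed

end
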